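(* Let $r>0$, $0<p<1$, $q=1-p$, and $X\sim\mathcal{UNB}(r,p)$. Then $$\mathbb{E}(X)=\frac{rq}{2p},\qquad \mathbb{V}(X)=\frac{rq}{12p}\left(6+\frac{4q}{p}+\frac{rq}{p}\right),$$ and the index of dispersion satisfies $\frac{\mathbb{V}(X)}{\mathbb{E}(X)}=1+\frac{4q}{6p}+\frac{rq}{6p}>1$, so $X$ is always overdispersed.
   Context: $\mathcal{UNB}(r,p)$ is the law of $X$ where $N$ is negative binomial with $P(N=n)=\binom{r+n-1}{n}p^rq^n=\frac{\Gamma(r+n)}{n!\Gamma(r)}p^rq^n$, $n\ge0$, and conditionally on $N=n$, $X$ is uniform on $\{0,1,\dots,n\}$. *)

theory Defs
  imports "HOL-Probability.Probability"
begin

definition nb_mass :: "real \<Rightarrow> real \<Rightarrow> nat \<Rightarrow> real" where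
  "nb_mass r p n = Gamma (r + real n) / (fact n * Gamma r) * p powr r * (1 - p) ^ n"

definition neg_binomial_pmf :: "real \<Rightarrow> real \<Rightarrow> nat pmf" where
  "neg_binomial_pmf r p = embed_pmf (nb_mass r p)"

definition unb_pmf :: "real \<Rightarrow> real \<Rightarrow> nat pmf" where
  "unb_pmf r p = bind_pmf (neg_binomial_pmf r p) (\<lambda>n. pmf_of_set {0..n})"

end

theory Submission
  imports Defs
begin

(* Conditionally on N = n, X is uniform on {0..n}, so E(X | N) = N/2 and
   E(X^2 | N) = N(2N+1)/6 = (4 C(N,2) + 3 N)/6. The binomial moments of the negative binomial law,
   E C(N,k) = (r)_k / k! * (q/p)^k, follow from the generalised binomial series
   sum_n (r)_n / n! * q^n = (1 - q) powr -r by induction on k. *)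

definition nb_series_term :: "real \<Rightarrow> real \<Rightarrow> nat \<Rightarrow> real" where
  "nb_series_term r q n = pochhammer r n / fact n * q ^ n"

lemma nb_series_term_sums:
  fixes r q :: real
  assumes "\<bar>q\<bar> < 1"
  shows "nb_series_term r q sums (1 - q) powr (- r)"
proof -
  have "(\<lambda>n. ((- r) gchoose n) * (- q) ^ n) sums (1 + (- q)) powr (- r)"
    by (rule gen_binomial_real) (use assms in simp)
  moreover have "((- r) gchoose n) * (- q) ^ n = nb_series_term r q n" for n
    by (simp add: nb_series_term_def gbinomial_pochhammer power_minus[of q])
  ultimately show ?thesis by simp
qed

lemma Suc_times_nb_series_term:
  "real (Suc m) * nb_series_term r q (Suc m) = r * q * nb_series_term (r + 1) q m"
  by (simp add: nb_series_term_def pochhammer_rec divide_simps del: of_nat_Suc)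

lemma binomial_moment_nb_series_sums:
  fixes r q :: real
  assumes "\<bar>q\<bar> < 1"
  shows "(\<lambda>n. real (n choose k) * nb_series_term r q n)
           sums (pochhammer r k / fact k * q ^ k * (1 - q) powr (- (r + real k)))"
proof (induction k arbitrary: r)
  case 0
  then show ?case using nb_series_term_sums[OF assms] by simp
next
  case (Suc k)
  let ?f = "\<lambda>n. real (n choose Suc k) * nb_series_term r q n"
  \<comment> \<open>Absorption \<open>(k+1) C(m+1,k+1) = (m+1) C(m,k)\<close> together with the previous lemma
    reduces the series for \<open>k+1\<close> and shape \<open>r\<close> to the series for \<open>k\<close> and shape \<open>r+1\<close>,
    shifted by one index.\<close>
  have scaled_IH: "(\<lambda>m. r * q / real (Suc k) * (real (m choose k) * nb_series_term (r + 1) q m))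
          sums (r * q / real (Suc k) * (pochhammer (r + 1) k / fact k * q ^ k
                  * (1 - q) powr (- (r + 1 + real k))))"
    by (intro sums_mult Suc.IH)
  have term_eq: "?f (Suc m) = r * q / real (Suc k) * (real (m choose k) * nb_series_term (r + 1) q m)"
    for m
  proof -
    have "real (Suc k) * ?f (Suc m) = real (m choose k) * (real (Suc m) * nb_series_term r q (Suc m))"
      using Suc_times_binomial[of k m] by (metis mult.assoc mult.commute of_nat_mult)
    then show ?thesis
      using Suc_times_nb_series_term[of m r q]
      by (simp add: field_simps del: of_nat_Suc binomial_Suc_Suc)
  qed
  have sum_eq: "r * q / real (Suc k) * (pochhammer (r + 1) k / fact k * q ^ k * x)
      = pochhammer r (Suc k) / fact (Suc k) * q ^ Suc k * x" for x
    unfolding pochhammer_rec fact_Suc power_Suc of_nat_mult by (simp add: divide_simps)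
  have shifted_sums: "(\<lambda>m. ?f (Suc m)) sums (pochhammer r (Suc k) / fact (Suc k) * q ^ Suc k
                                * (1 - q) powr (- (r + real (Suc k))))"
  proof -
    have "r + 1 + real k = r + real (Suc k)"
      by simp
    then show ?thesis
      using scaled_IH by (simp only: term_eq sum_eq)
  qed
  have "?f 0 = 0"
    by simp
  then show ?case
    using shifted_sums by (rule sums_Suc_imp)
qed

lemma nb_mass_eq_nb_series_term:
  assumes "r > 0"
  shows "nb_mass r p n = p powr r * nb_series_term r (1 - p) n"
proof -
  have "r \<notin> \<int>\<^sub>\<le>\<^sub>0" using assms nonpos_Ints_nonpos by fastforce
  then have "pochhammer r n = Gamma (r + real n) / Gamma r" by (rule pochhammer_Gamma)
  moreover have "Gamma r > 0" using assms by (rule Gamma_real_pos)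
  ultimately show ?thesis unfolding nb_mass_def nb_series_term_def by (simp add: field_simps)
qed

lemma nb_mass_nonneg:
  assumes "r > 0" "0 < p" "p < 1"
  shows "0 \<le> nb_mass r p n"
  using assms by (simp add: nb_mass_eq_nb_series_term nb_series_term_def pochhammer_nonneg)

lemma nb_mass_binomial_moment_sums:
  assumes "r > 0" "0 < p" "p < 1"
  shows "(\<lambda>n. real (n choose k) * nb_mass r p n) sums (pochhammer r k / fact k * ((1 - p) / p) ^ k)"
proof -
  have series: "(\<lambda>n. p powr r * (real (n choose k) * nb_series_term r (1 - p) n))
          sums (p powr r * (pochhammer r k / fact k * (1 - p) ^ k * (1 - (1 - p)) powr (- (r + real k))))"
    using assms by (intro sums_mult binomial_moment_nb_series_sums) simp
  have mass_eq: "(\<lambda>n. p powr r * (real (n choose k) * nb_series_term r (1 - p) n))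
      = (\<lambda>n. real (n choose k) * nb_mass r p n)"
    using assms by (simp add: nb_mass_eq_nb_series_term mult.left_commute)
  have value_eq: "p powr r * (pochhammer r k / fact k * (1 - p) ^ k * (1 - (1 - p)) powr (- (r + real k)))
      = pochhammer r k / fact k * ((1 - p) / p) ^ k"
  proof -
    have powr_eq: "p powr r * (1 - (1 - p)) powr (- (r + real k)) = 1 / p ^ k"
      using assms by (simp add: powr_add[symmetric] powr_minus powr_realpow divide_inverse)
    have "p powr r * (pochhammer r k / fact k * (1 - p) ^ k * (1 - (1 - p)) powr (- (r + real k)))
        = pochhammer r k / fact k * (1 - p) ^ k * (p powr r * (1 - (1 - p)) powr (- (r + real k)))"
      by (simp only: ac_simps)
    also have "\<dots> = pochhammer r k / fact k * ((1 - p) / p) ^ k"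
      by (simp only: powr_eq) (simp add: power_divide)
    finally show ?thesis .
  qed
  show ?thesis
    using series unfolding mass_eq value_eq .
qed

lemma nn_integral_count_space_nat_sums:
  fixes f :: "nat \<Rightarrow> real"
  assumes "\<And>n. 0 \<le> f n" "f sums s"
  shows "(\<integral>\<^sup>+n. ennreal (f n) \<partial>count_space UNIV) = ennreal s"
  using assms by (simp add: nn_integral_count_space_nat suminf_ennreal2 sums_iff)

lemma nn_integral_embed_pmf_sums:
  fixes f g :: "nat \<Rightarrow> real"
  assumes "\<And>n. 0 \<le> f n" "f sums 1" "\<And>n. 0 \<le> g n" "(\<lambda>n. g n * f n) sums s"
  shows "(\<integral>\<^sup>+n. ennreal (g n) \<partial>measure_pmf (embed_pmf f)) = ennreal s"
proof -
  have "pmf (embed_pmf f) = f"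
    using assms(1,2) by (intro ext pmf_embed_pmf) (simp_all add: nn_integral_count_space_nat_sums)
  then have "(\<integral>\<^sup>+n. ennreal (g n) \<partial>measure_pmf (embed_pmf f))
      = (\<integral>\<^sup>+n. ennreal (g n * f n) \<partial>count_space UNIV)"
    using assms(1,3) by (simp add: nn_integral_measure_pmf ennreal_mult'' mult.commute)
  also have "\<dots> = ennreal s"
    using assms by (intro nn_integral_count_space_nat_sums) simp_all
  finally show ?thesis .
qed

lemma nn_integral_neg_binomial_pmf_sums:
  assumes "r > 0" "0 < p" "p < 1" "\<And>n. 0 \<le> g n" "(\<lambda>n. g n * nb_mass r p n) sums s"
  shows "(\<integral>\<^sup>+n. ennreal (g n) \<partial>measure_pmf (neg_binomial_pmf r p)) = ennreal s"
  unfolding neg_binomial_pmf_def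
  using assms nb_mass_nonneg nb_mass_binomial_moment_sums[of r p 0]
  by (intro nn_integral_embed_pmf_sums) simp_all

lemma nn_integral_unb_pmf:
  fixes f :: "nat \<Rightarrow> real"
  assumes "\<And>x. 0 \<le> f x"
  shows "(\<integral>\<^sup>+x. ennreal (f x) \<partial>measure_pmf (unb_pmf r p))
       = (\<integral>\<^sup>+n. ennreal ((\<Sum>x=0..n. f x) / (real n + 1)) \<partial>measure_pmf (neg_binomial_pmf r p))"
proof -
  have "(\<integral>\<^sup>+x. ennreal (f x) \<partial>measure_pmf (pmf_of_set {0..n}))
      = ennreal ((\<Sum>x=0..n. f x) / (real n + 1))" for n
  proof -
    have "(\<integral>\<^sup>+x. ennreal (f x) \<partial>measure_pmf (pmf_of_set {0..n}))
        = ennreal (\<Sum>x=0..n. f x) / ennreal (real n + 1)"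
      using assms by (simp add: nn_integral_pmf_of_set sum_ennreal ennreal_of_nat_eq_real_of_nat add.commute)
    also have "\<dots> = ennreal ((\<Sum>x=0..n. f x) / (real n + 1))"
      using assms by (intro divide_ennreal) (auto intro: sum_nonneg)
    finally show ?thesis .
  qed
  then show ?thesis
    unfolding unb_pmf_def nn_integral_bind_pmf by simp
qed

lemma mean_atLeast0AtMost: "(\<Sum>x=0..n. real x) / (real n + 1) = real n / 2"
proof -
  have "(\<Sum>x=0..n. real x) = real n * (real n + 1) / 2"
    by (induction n) (simp_all add: field_simps)
  then show ?thesis by (simp add: field_simps)
qed

lemma mean_squares_atLeast0AtMost:
  "(\<Sum>x=0..n. real x ^ 2) / (real n + 1) = real n * (2 * real n + 1) / 6"
proof -
  have "(\<Sum>x=0..n. real x ^ 2) = real n * (real n + 1) * (2 * real n + 1) / 6"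
    by (induction n) (simp_all add: field_simps power2_eq_square)
  then show ?thesis by (simp add: field_simps)
qed

lemma real_choose_two: "real (n choose 2) = real n * (real n - 1) / 2"
  by (induction n) (simp_all add: numeral_2_eq_2 algebra_simps)

lemma nn_integral_unb_pmf_real:
  assumes "r > 0" "0 < p" "p < 1"
  shows "(\<integral>\<^sup>+x. ennreal (real x) \<partial>measure_pmf (unb_pmf r p)) = ennreal (r * (1 - p) / (2 * p))"
proof -
  have "(\<lambda>n. real n / 2 * nb_mass r p n) sums (r * (1 - p) / (2 * p))"
    using sums_divide[OF nb_mass_binomial_moment_sums[OF assms, of 1], of 2] by (simp add: ac_simps)
  then show ?thesis
    unfolding nn_integral_unb_pmf[OF of_nat_0_le_iff] mean_atLeast0AtMost
    by (intro nn_integral_neg_binomial_pmf_sums assms) simp_all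
qed

lemma nn_integral_unb_pmf_real_square:
  assumes "r > 0" "0 < p" "p < 1"
  shows "(\<integral>\<^sup>+x. ennreal (real x ^ 2) \<partial>measure_pmf (unb_pmf r p))
       = ennreal ((2 * r * (r + 1) * ((1 - p) / p) ^ 2 + 3 * r * ((1 - p) / p)) / 6)"
proof -
  have series: "(\<lambda>n. (4 * (real (n choose 2) * nb_mass r p n) + 3 * (real (n choose 1) * nb_mass r p n)) / 6)
      sums ((4 * (pochhammer r 2 / fact 2 * ((1 - p) / p) ^ 2)
             + 3 * (pochhammer r 1 / fact 1 * ((1 - p) / p) ^ 1)) / 6)"
    by (intro sums_divide sums_add sums_mult nb_mass_binomial_moment_sums assms)
  have mass_eq: "(\<lambda>n. (4 * (real (n choose 2) * nb_mass r p n) + 3 * (real (n choose 1) * nb_mass r p n)) / 6)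
      = (\<lambda>n. real n * (2 * real n + 1) / 6 * nb_mass r p n)"
    by (rule ext) (simp add: real_choose_two field_simps)
  have value_eq: "(4 * (pochhammer r 2 / fact 2 * t ^ 2) + 3 * (pochhammer r 1 / fact 1 * t ^ 1)) / 6
      = (2 * r * (r + 1) * t ^ 2 + 3 * r * t) / 6" for t :: real
    by (simp add: numeral_2_eq_2 pochhammer_Suc algebra_simps)
  have "(\<lambda>n. real n * (2 * real n + 1) / 6 * nb_mass r p n)
      sums ((2 * r * (r + 1) * ((1 - p) / p) ^ 2 + 3 * r * ((1 - p) / p)) / 6)"
    using series unfolding mass_eq value_eq .
  then show ?thesis
    unfolding nn_integral_unb_pmf[of "\<lambda>x. real x ^ 2", OF zero_le_power2] mean_squares_atLeast0AtMost
    by (intro nn_integral_neg_binomial_pmf_sums assms) simp_all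
qed

lemma has_bochner_integral_unb_pmf_real:
  assumes "r > 0" "0 < p" "p < 1"
  shows "has_bochner_integral (measure_pmf (unb_pmf r p)) real (r * (1 - p) / (2 * p))"
  using assms by (intro has_bochner_integral_nn_integral nn_integral_unb_pmf_real) simp_all

lemma has_bochner_integral_unb_pmf_real_square:
  assumes "r > 0" "0 < p" "p < 1"
  shows "has_bochner_integral (measure_pmf (unb_pmf r p)) (\<lambda>x. real x ^ 2)
           ((2 * r * (r + 1) * ((1 - p) / p) ^ 2 + 3 * r * ((1 - p) / p)) / 6)"
  using assms by (intro has_bochner_integral_nn_integral nn_integral_unb_pmf_real_square) simp_all

lemma variance_unb_pmf:
  assumes "r > 0" "0 < p" "p < 1"
  shows "measure_pmf.variance (unb_pmf r p) real
       = r * (1 - p) / (12 * p) * (6 + 4 * (1 - p) / p + r * (1 - p) / p)"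
proof -
  note first = has_bochner_integral_unb_pmf_real[OF assms]
  note second = has_bochner_integral_unb_pmf_real_square[OF assms]
  have "measure_pmf.variance (unb_pmf r p) real
      = (2 * r * (r + 1) * ((1 - p) / p) ^ 2 + 3 * r * ((1 - p) / p)) / 6 - (r * (1 - p) / (2 * p)) ^ 2"
    using measure_pmf.variance_eq[OF integrable.intros[OF first]
        integrable.intros[OF second]]
    by (simp add: has_bochner_integral_integral_eq[OF first] has_bochner_integral_integral_eq[OF second])
  also have "\<dots> = r * (1 - p) / (12 * p) * (6 + 4 * (1 - p) / p + r * (1 - p) / p)"
    using assms by (simp add: field_simps power2_eq_square)
  finally show ?thesis .
qed

theorem mainTheorem8:
  fixes r p q :: real
  assumes "r > 0" and "0 < p" and "p < 1" and "q = 1 - p"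
  shows "measure_pmf.expectation (unb_pmf r p) real = r * q / (2 * p)
     \<and> measure_pmf.variance (unb_pmf r p) real
         = r * q / (12 * p) * (6 + 4 * q / p + r * q / p)
     \<and> measure_pmf.variance (unb_pmf r p) real / measure_pmf.expectation (unb_pmf r p) real
         = 1 + 4 * q / (6 * p) + r * q / (6 * p)
     \<and> measure_pmf.variance (unb_pmf r p) real / measure_pmf.expectation (unb_pmf r p) real > 1"
proof -
  have q: "q > 0"
    using assms by simp
  have mean: "measure_pmf.expectation (unb_pmf r p) real = r * q / (2 * p)"
    using has_bochner_integral_integral_eq[OF has_bochner_integral_unb_pmf_real] assms by simp
  have variance: "measure_pmf.variance (unb_pmf r p) real = r * q / (12 * p) * (6 + 4 * q / p + r * q / p)"
    using variance_unb_pmf assms by simp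
  have dispersion: "r * q / (12 * p) * (6 + 4 * q / p + r * q / p) / (r * q / (2 * p))
      = 1 + 4 * q / (6 * p) + r * q / (6 * p)"
    using assms q by (simp add: field_simps)
  have "1 + 4 * q / (6 * p) + r * q / (6 * p) > 1"
    using assms q by (simp add: add_pos_pos)
  then show ?thesis
    using mean variance dispersion by simp
qed

end
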